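(* Let $\mathfrak{g}$ be a finite-dimensional real Lie algebra and let $\mathcal{A}^{(3)}_{\mathfrak{g}}$ be a Darboux family for $V^{(3)}_{\mathfrak{g}}$ on $\Lambda^3\mathfrak{g}$. Then the space of functions $\mathcal{A}:=\{g\in C^\infty(\Lambda^2\mathfrak{g}): g(r)=f([r,r])\ \forall r,\ f\in\mathcal{A}^{(3)}_{\mathfrak{g}}\}$ is a Darboux family for $V_{\mathfrak{g}}$ on $\Lambda^2\mathfrak{g}$. If moreover $\mathcal{A}^{(3)}_{\mathfrak{g}}$ is a linear Darboux family, then $\mathcal{A}$ is a linear Darboux family.
   Context: $[\cdot,\cdot]$ denotes the algebraic Schouten bracket on $\Lambda\mathfrak{g}$ (the graded extension of the Lie bracket, given on decomposables by $[X_1\wedge\dots\wedge X_s,Y_1\wedge\dots\wedge Y_l]=\sum_{i,j}(-1)^{i+j}[X_i,Y_j]\wedge X_1\wedge\dots\widehat{X_i}\dots\wedge X_s\wedge Y_1\wedge\dots\widehat{Y_j}\dots\wedge Y_l$), so $[r,r]\in\Lambda^3\mathfrak{g}$ for $r\in\Lambda^2\mathfrak{g}$. $V_{\mathfrak{g}}$ (resp. $V^{(3)}_{\mathfrak{g}}$) is the Lie algebra of fundamental vector fields of the action $T\mapsto\Lambda^2T$ (resp. $T\mapsto\Lambda^3T$) of $\mathrm{Aut}(\mathfrak{g})$ on $\Lambda^2\mathfrak{g}$ (resp. $\Lambda^3\mathfrak{g}$), i.e. the vector fields $w\mapsto (\Lambda^2d)(w)$ (resp. $(\Lambda^3d)(w)$),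 $d\in\mathfrak{der}(\mathfrak{g})$. A Darboux family for a Lie algebra $V$ of vector fields on $M$ is a finite-dimensional space $\mathcal{A}=\langle f_1,\dots,f_s\rangle$ of smooth functions with $Xf_j=\sum_i h^i_{jX}f_i$, $h^i_{jX}\in C^\infty(M)$, for all $X\in V$; it is linear if all cofactors $h^i_{jX}$ can be taken constant. *)

theory Defs
  imports "HOL-Analysis.Analysis"
begin

text \<open>The finite-dimensional real Lie algebra g is realised (after choosing a
basis indexed by the finite type 'n) as real^'n with a bilinear, antisymmetric bracket
satisfying the Jacobi identity. The exterior powers are identified with antisymmetric
tensors: X1 wedge ... wedge Xk corresponds to the signed sum over permutations of
X_s(1) tensor ... tensor X_s(k). Bivectors are antisymmetric matrices real^'n^'n,
trivectors are totally antisymmetric elements of real^'n^'n^'n.\<close>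

definition lie_algebra :: "(real^'n \<Rightarrow> real^'n \<Rightarrow> real^'n) \<Rightarrow> bool" where
  "lie_algebra br \<longleftrightarrow> bilinear br \<and> (\<forall>x y. br x y = - br y x) \<and>
     (\<forall>x y z. br x (br y z) + br y (br z x) + br z (br x y) = 0)"

definition derivation :: "(real^'n \<Rightarrow> real^'n \<Rightarrow> real^'n) \<Rightarrow> (real^'n \<Rightarrow> real^'n) \<Rightarrow> bool" where
  "derivation br d \<longleftrightarrow> linear d \<and> (\<forall>x y. d (br x y) = br (d x) y + br x (d y))"

definition Lambda2 :: "(real^'n^'n) set" where
  "Lambda2 = {r. \<forall>i j. r$i$j = - r$j$i}"

definition Lambda3 :: "(real^'n^'n^'n) set" where
  "Lambda3 = {T. \<forall>i j k. T$i$j$k = - T$j$i$k \<and> T$i$j$k = - T$i$k$j}"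

text \<open>Induced action of an endomorphism d on 2- and 3-tensors (derivation extension).\<close>
definition lam2 :: "(real^'n \<Rightarrow> real^'n) \<Rightarrow> real^'n^'n \<Rightarrow> real^'n^'n" where
  "lam2 d r = (\<chi> i j. (\<Sum>a\<in>UNIV. (d (axis a 1))$i * r$a$j) + (\<Sum>b\<in>UNIV. r$i$b * (d (axis b 1))$j))"

definition lam3 :: "(real^'n \<Rightarrow> real^'n) \<Rightarrow> real^'n^'n^'n \<Rightarrow> real^'n^'n^'n" where
  "lam3 d T = (\<chi> i j k. (\<Sum>a\<in>UNIV. (d (axis a 1))$i * T$a$j$k)
                       + (\<Sum>b\<in>UNIV. (d (axis b 1))$j * T$i$b$k)
                       + (\<Sum>c\<in>UNIV. (d (axis c 1))$k * T$i$j$c))"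

definition Vg :: "(real^'n \<Rightarrow> real^'n \<Rightarrow> real^'n) \<Rightarrow> (real^'n^'n \<Rightarrow> real^'n^'n) set" where
  "Vg br = {lam2 d | d. derivation br d}"

definition Vg3 :: "(real^'n \<Rightarrow> real^'n \<Rightarrow> real^'n) \<Rightarrow> (real^'n^'n^'n \<Rightarrow> real^'n^'n^'n) set" where
  "Vg3 br = {lam3 d | d. derivation br d}"

text \<open>Antisymmetrisation of a 3-tensor (image of X wedge Y wedge Z is alt3 of X tensor Y tensor Z).\<close>
definition alt3 :: "real^'n^'n^'n \<Rightarrow> real^'n^'n^'n" where
  "alt3 T = (\<chi> x y z. T$x$y$z - T$x$z$y - T$y$x$z + T$y$z$x + T$z$x$y - T$z$y$x)"

text \<open>If r = sum r_ab e_a tensor e_b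
(i.e. r corresponds to (1/2) sum r_ab e_a wedge e_b), then
[r,r] = sum_{a,b,c,d} r_ab r_cd [e_a,e_c] wedge e_b wedge e_d.\<close>
definition schouten_rr :: "(real^'n \<Rightarrow> real^'n \<Rightarrow> real^'n) \<Rightarrow> real^'n^'n \<Rightarrow> real^'n^'n^'n" where
  "schouten_rr br r = alt3 (\<chi> k b d. \<Sum>a\<in>UNIV. \<Sum>c\<in>UNIV. r$a$b * r$c$d * (br (axis a 1) (axis c 1))$k)"

primrec Ck :: "nat \<Rightarrow> ('a::euclidean_space \<Rightarrow> real) \<Rightarrow> bool" where
  "Ck 0 f = continuous_on UNIV f"
| "Ck (Suc k) f = ((\<forall>x. f differentiable (at x)) \<and>
                    (\<forall>v. Ck k (\<lambda>x. frechet_derivative f (at x) v)))"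

definition Cinf :: "('a::euclidean_space \<Rightarrow> real) \<Rightarrow> bool" where
  "Cinf f \<longleftrightarrow> (\<forall>k. Ck k f)"

text \<open>Smooth functions on a linear subspace M: restrictions of smooth functions.
Functions on M are represented by ambient functions; only their values on M matter.\<close>
definition smooth_on :: "'a::euclidean_space set \<Rightarrow> ('a \<Rightarrow> real) \<Rightarrow> bool" where
  "smooth_on M f \<longleftrightarrow> (\<exists>F. Cinf F \<and> (\<forall>x\<in>M. F x = f x))"

definition vf_apply :: "('a::euclidean_space \<Rightarrow> 'a) \<Rightarrow> ('a \<Rightarrow> real) \<Rightarrow> 'a \<Rightarrow> real" where
  "vf_apply X f x = deriv (\<lambda>t. f (x + t *\<^sub>R X x)) 0"

definition darboux_family ::
  "'a::euclidean_space set \<Rightarrow> ('a \<Rightarrow> 'a) set \<Rightarrow> ('a \<Rightarrow> real) set \<Rightarrow> bool" where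
  "darboux_family M V A \<longleftrightarrow> (\<exists>fs::('a \<Rightarrow> real) list.
     (\<forall>f\<in>set fs. smooth_on M f) \<and>
     A = {g. smooth_on M g \<and> (\<exists>c::nat \<Rightarrow> real. \<forall>x\<in>M. g x = (\<Sum>i<length fs. c i * (fs!i) x))} \<and>
     (\<forall>X\<in>V. \<forall>j<length fs. \<exists>h::nat \<Rightarrow> 'a \<Rightarrow> real.
        (\<forall>i<length fs. smooth_on M (h i)) \<and>
        (\<forall>x\<in>M. vf_apply X (fs!j) x = (\<Sum>i<length fs. h i x * (fs!i) x))))"

definition linear_darboux_family ::
  "'a::euclidean_space set \<Rightarrow> ('a \<Rightarrow> 'a) set \<Rightarrow> ('a \<Rightarrow> real) set \<Rightarrow> bool" where
  "linear_darboux_family M V A \<longleftrightarrow> (\<exists>fs::('a \<Rightarrow> real) list.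
     (\<forall>f\<in>set fs. smooth_on M f) \<and>
     A = {g. smooth_on M g \<and> (\<exists>c::nat \<Rightarrow> real. \<forall>x\<in>M. g x = (\<Sum>i<length fs. c i * (fs!i) x))} \<and>
     (\<forall>X\<in>V. \<forall>j<length fs. \<exists>h::nat \<Rightarrow> real.
        (\<forall>x\<in>M. vf_apply X (fs!j) x = (\<Sum>i<length fs. h i * (fs!i) x))))"

end

theory Submission
  imports Defs
begin

text \<open>The map \<open>\<phi> r = [r,r]\<close> from \<open>\<Lambda>\<^sup>2g\<close> to \<open>\<Lambda>\<^sup>3g\<close> intertwines the infinitesimal actions of the
  derivations of \<open>g\<close>: by bilinearity of the Schouten bracket and the Leibniz rule for a derivation
  \<open>d\<close>, the derivative of \<open>\<phi>\<close> at \<open>r\<close> in the direction \<open>\<Lambda>\<^sup>2d(r)\<close> is \<open>\<Lambda>\<^sup>3d([r,r])\<close>. So every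
  fundamental field \<open>X\<close> of \<open>\<Lambda>\<^sup>2g\<close> is \<open>\<phi>\<close>-related to the corresponding field \<open>Y\<close> of \<open>\<Lambda>\<^sup>3g\<close>, and
  \<open>X(f \<circ> \<phi>) = (Y f) \<circ> \<phi>\<close>. Pulling back generators \<open>f\<^sub>i\<close> of the Darboux family on \<open>\<Lambda>\<^sup>3g\<close> along \<open>\<phi>\<close>
  thus gives generators \<open>f\<^sub>i \<circ> \<phi>\<close> with cofactors \<open>h\<^sub>i \<circ> \<phi>\<close>, which are smooth because \<open>\<phi>\<close> is
  quadratic, and constant when the \<open>h\<^sub>i\<close> are.\<close>

section \<open>Smooth functions\<close>

lemma Ck_Suc_imp_Ck: "Ck (Suc k) f \<Longrightarrow> Ck k f"
proof (induction k arbitrary: f)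
  case 0
  then show ?case
    by (auto intro!: continuous_at_imp_continuous_on differentiable_imp_continuous_within)
next
  case (Suc k)
  then show ?case by (metis Ck.simps(2))
qed

lemma Ck_const: "Ck k (\<lambda>x::'a::euclidean_space. c)"
proof (induction k arbitrary: c)
  case (Suc k)
  have "frechet_derivative (\<lambda>x::'a. c) (at x) = (\<lambda>h. 0)" for x
    by (rule frechet_derivative_at[symmetric]) (rule has_derivative_const)
  then show ?case using Suc by simp
qed simp

lemma Ck_add: "Ck k f \<Longrightarrow> Ck k g \<Longrightarrow> Ck k (\<lambda>x::'a::euclidean_space. f x + g x)"
proof (induction k arbitrary: f g)
  case (Suc k)
  have "frechet_derivative (\<lambda>x. f x + g x) (at x)
      = (\<lambda>h. frechet_derivative f (at x) h + frechet_derivative g (at x) h)" for x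
    using Suc.prems
    by (intro frechet_derivative_at[symmetric] has_derivative_add)
       (auto simp: frechet_derivative_works[symmetric])
  then show ?case using Suc by auto
qed (auto intro: continuous_on_add)

lemma Ck_mult: "Ck k f \<Longrightarrow> Ck k g \<Longrightarrow> Ck k (\<lambda>x::'a::euclidean_space. f x * g x)"
proof (induction k arbitrary: f g)
  case (Suc k)
  have "frechet_derivative (\<lambda>x. f x * g x) (at x)
      = (\<lambda>h. f x * frechet_derivative g (at x) h + frechet_derivative f (at x) h * g x)" for x
    using Suc.prems
    by (intro frechet_derivative_at[symmetric] has_derivative_mult)
       (auto simp: frechet_derivative_works[symmetric])
  moreover have "Ck k f" "Ck k g" using Suc.prems Ck_Suc_imp_Ck by blast+
  ultimately show ?case using Suc by (auto intro!: Suc.IH Ck_add)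
qed (auto intro: continuous_on_mult)

lemma Ck_sum:
  "finite S \<Longrightarrow> (\<And>i. i \<in> S \<Longrightarrow> Ck k (f i)) \<Longrightarrow> Ck k (\<lambda>x::'a::euclidean_space. \<Sum>i\<in>S. f i x)"
  by (induction S rule: finite_induct) (auto intro: Ck_add Ck_const)

lemma Ck_linear:
  assumes "linear (l :: 'a::euclidean_space \<Rightarrow> real)"
  shows "Ck k l"
proof -
  have bl: "bounded_linear l" using assms linear_conv_bounded_linear by blast
  show ?thesis
  proof (cases k)
    case 0
    then show ?thesis using bl by (simp add: linear_continuous_on)
  next
    case (Suc m)
    have "frechet_derivative l (at x) = l" for x
      by (rule frechet_derivative_at[symmetric]) (rule bounded_linear_imp_has_derivative[OF bl])
    then show ?thesis using Suc bl by (simp add: Ck_const bounded_linear_imp_differentiable)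
  qed
qed

lemma Cinf_mult: "Cinf f \<Longrightarrow> Cinf g \<Longrightarrow> Cinf (\<lambda>x::'a::euclidean_space. f x * g x)"
  by (simp add: Cinf_def Ck_mult)

lemma Cinf_frechet_derivative: "Cinf f \<Longrightarrow> Cinf (\<lambda>x. frechet_derivative f (at x) v)"
  unfolding Cinf_def by (metis Ck.simps(2))

lemma Cinf_differentiable: "Cinf f \<Longrightarrow> f differentiable (at x)"
  unfolding Cinf_def by (metis Ck.simps(2))

lemma linear_real_expansion:
  assumes "linear (f :: 'a::euclidean_space \<Rightarrow> real)"
  shows "f w = (\<Sum>b\<in>Basis. (w \<bullet> b) * f b)"
  using Linear_Algebra.linear_componentwise[OF assms, of w 1] by simp

lemma frechet_derivative_mult_compose:
  assumes p: "p differentiable (at x)" and G: "G differentiable (at (S x))"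
    and S: "(S has_derivative DS) (at x)"
  shows "frechet_derivative (\<lambda>x. p x * G (S x)) (at x) v
    = (\<Sum>b\<in>Basis. p x * (DS v \<bullet> b) * frechet_derivative G (at (S x)) b)
      + frechet_derivative p (at x) v * G (S x)"
proof -
  have G': "(G has_derivative frechet_derivative G (at (S x))) (at (S x))"
    using G frechet_derivative_works by blast
  have "((\<lambda>x. p x * G (S x)) has_derivative
      (\<lambda>h. p x * frechet_derivative G (at (S x)) (DS h) + frechet_derivative p (at x) h * G (S x))) (at x)"
    using p by (intro has_derivative_mult has_derivative_compose[OF S G'])
      (simp add: frechet_derivative_works[symmetric])
  then have "frechet_derivative (\<lambda>x. p x * G (S x)) (at x) v
      = p x * frechet_derivative G (at (S x)) (DS v) + frechet_derivative p (at x) v * G (S x)"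
    by (simp add: frechet_derivative_at[symmetric])
  also have "frechet_derivative G (at (S x)) (DS v) = (\<Sum>b\<in>Basis. (DS v \<bullet> b) * frechet_derivative G (at (S x)) b)"
    using G' has_derivative_linear linear_real_expansion by blast
  finally show ?thesis by (simp add: sum_distrib_left mult.assoc)
qed

text \<open>The factor \<open>p\<close> absorbs the partial derivatives of \<open>S\<close> that the chain rule produces.\<close>

lemma Ck_mult_compose:
  fixes S :: "'a::euclidean_space \<Rightarrow> 'b::euclidean_space"
  assumes S: "\<And>x. (S has_derivative DS x) (at x)"
    and DS: "\<And>v b. Cinf (\<lambda>x. DS x v \<bullet> b)"
  shows "Cinf p \<Longrightarrow> Ck k G \<Longrightarrow> Ck k (\<lambda>x. p x * G (S x))"
proof (induction k arbitrary: p G)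
  case 0
  have "continuous_on UNIV S"
    using S by (meson continuous_at_imp_continuous_on has_derivative_continuous)
  then have "continuous_on UNIV (\<lambda>x. G (S x))"
    using 0 continuous_on_compose[of UNIV S G] continuous_on_subset by (auto simp: o_def)
  moreover have "continuous_on UNIV p" using 0 unfolding Cinf_def by (metis Ck.simps(1))
  ultimately show ?case by (auto intro: continuous_on_mult)
next
  case (Suc k)
  have "(\<lambda>x. p x * G (S x)) differentiable (at x)" for x
  proof -
    have "(G \<circ> S) differentiable (at x)"
      using S Suc.prems(2) by (intro differentiable_chain_at) (auto simp: differentiable_def)
    then show ?thesis
      using differentiable_mult[OF Cinf_differentiable[OF Suc.prems(1)]] by (simp add: o_def)
  qed
  moreover have "Ck k (\<lambda>x. frechet_derivative (\<lambda>x. p x * G (S x)) (at x) v)" for v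
  proof -
    have "Ck k (\<lambda>x. p x * (DS x v \<bullet> b) * frechet_derivative G (at (S x)) b)" for b
      using Suc.prems(2) by (intro Suc.IH Cinf_mult Suc.prems(1) DS) simp
    moreover have "Ck k (\<lambda>x. frechet_derivative p (at x) v * G (S x))"
      using Suc.prems(1) Ck_Suc_imp_Ck[OF Suc.prems(2)] by (intro Suc.IH Cinf_frechet_derivative)
    moreover have "frechet_derivative (\<lambda>x. p x * G (S x)) (at x) v
      = (\<Sum>b\<in>Basis. p x * (DS x v \<bullet> b) * frechet_derivative G (at (S x)) b)
        + frechet_derivative p (at x) v * G (S x)" for x
      using Suc.prems(2)
      by (intro frechet_derivative_mult_compose Cinf_differentiable[OF Suc.prems(1)] S) simp
    ultimately show ?thesis
      by (simp only:) (intro Ck_add Ck_sum finite_Basis)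
  qed
  ultimately show ?case by simp
qed

lemma Cinf_compose:
  fixes S :: "'a::euclidean_space \<Rightarrow> 'b::euclidean_space"
  assumes "\<And>x. (S has_derivative DS x) (at x)" and "\<And>v b. Cinf (\<lambda>x. DS x v \<bullet> b)"
    and "Cinf G"
  shows "Cinf (\<lambda>x. G (S x))"
  using Ck_mult_compose[OF assms(1,2), of "\<lambda>_. 1"] assms(3) by (simp add: Cinf_def Ck_const)

lemma smooth_on_lincomb:
  fixes n :: nat
  assumes "\<forall>i<n. smooth_on M (f i)"
  shows "smooth_on M (\<lambda>x. \<Sum>i<n. c i * f i x)"
proof -
  obtain F where F: "\<forall>i<n. Cinf (F i) \<and> (\<forall>x\<in>M. F i x = f i x)"
    using assms unfolding smooth_on_def by metis
  then have "Ck k (\<lambda>x. \<Sum>i<n. c i * F i x)" for k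
    by (intro Ck_sum Ck_mult Ck_const) (simp_all add: Cinf_def)
  then have "Cinf (\<lambda>x. \<Sum>i<n. c i * F i x)"
    by (simp add: Cinf_def)
  moreover have "\<forall>x\<in>M. (\<Sum>i<n. c i * F i x) = (\<Sum>i<n. c i * f i x)" using F by simp
  ultimately show ?thesis unfolding smooth_on_def by blast
qed

section \<open>Directional derivatives along related vector fields\<close>

lemma vf_apply_eq_frechet_derivative:
  assumes F: "F differentiable (at x)" and f: "\<And>t. f (x + t *\<^sub>R X x) = F (x + t *\<^sub>R X x)"
  shows "vf_apply X f x = frechet_derivative F (at x) (X x)"
proof -
  let ?F' = "frechet_derivative F (at x)"
  have F': "(F has_derivative ?F') (at (x + 0 *\<^sub>R X x))"
    using F frechet_derivative_works by auto
  have "((\<lambda>t. x + t *\<^sub>R X x) has_derivative (\<lambda>t. t *\<^sub>R X x)) (at 0)"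
    by (auto intro!: derivative_eq_intros)
  from has_derivative_compose[OF this F']
  have "((\<lambda>t. F (x + t *\<^sub>R X x)) has_field_derivative ?F' (X x)) (at 0)"
    using linear_scale[OF has_derivative_linear[OF F']]
    by (intro has_derivative_imp_has_field_derivative) (simp_all add: mult.commute)
  then show ?thesis
    unfolding vf_apply_def f by (rule DERIV_imp_deriv)
qed

lemma vf_apply_compose:
  assumes F: "F differentiable (at (\<phi> x))" and \<phi>: "(\<phi> has_derivative D\<phi>) (at x)"
    and f: "\<forall>y\<in>M. f y = F y" and range: "range \<phi> \<subseteq> M"
    and line: "\<forall>t. \<phi> x + t *\<^sub>R Y (\<phi> x) \<in> M" and related: "D\<phi> (X x) = Y (\<phi> x)"
  shows "vf_apply X (\<lambda>x. f (\<phi> x)) x = vf_apply Y f (\<phi> x)"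
proof -
  have F': "(F has_derivative frechet_derivative F (at (\<phi> x))) (at (\<phi> x))"
    using F frechet_derivative_works by blast
  have "frechet_derivative (\<lambda>x. F (\<phi> x)) (at x) = (\<lambda>v. frechet_derivative F (at (\<phi> x)) (D\<phi> v))"
    using has_derivative_compose[OF \<phi> F'] by (simp add: frechet_derivative_at[symmetric])
  moreover have "vf_apply X (\<lambda>x. f (\<phi> x)) x = frechet_derivative (\<lambda>x. F (\<phi> x)) (at x) (X x)"
    using F \<phi> f range
    by (intro vf_apply_eq_frechet_derivative differentiable_chain_at[of \<phi> x F, unfolded o_def])
       (auto simp: differentiable_def)
  moreover have "vf_apply Y f (\<phi> x) = frechet_derivative F (at (\<phi> x)) (Y (\<phi> x))"
    using F f line by (intro vf_apply_eq_frechet_derivative) auto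
  ultimately show ?thesis using related by simp
qed

section \<open>Pulling back Darboux families\<close>

definition smooth_span :: "'a::euclidean_space set \<Rightarrow> ('a \<Rightarrow> real) list \<Rightarrow> ('a \<Rightarrow> real) set" where
  "smooth_span M fs =
     {g. smooth_on M g \<and> (\<exists>c::nat \<Rightarrow> real. \<forall>x\<in>M. g x = (\<Sum>i<length fs. c i * (fs!i) x))}"

text \<open>The lines through \<open>\<phi> x\<close> in direction \<open>Y (\<phi> x)\<close> must stay in \<open>M\<close>: \<open>vf_apply\<close> differentiates
  along them, and a function on \<open>M\<close> is only determined on \<open>M\<close>.\<close>

locale smooth_related_map =
  fixes \<phi> :: "'a::euclidean_space \<Rightarrow> 'b::euclidean_space" and D\<phi> :: "'a \<Rightarrow> 'a \<Rightarrow> 'b"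
    and N :: "'a set" and M :: "'b set"
    and V :: "('a \<Rightarrow> 'a) set" and W :: "('b \<Rightarrow> 'b) set"
  assumes has_derivative: "\<And>x. (\<phi> has_derivative D\<phi> x) (at x)"
    and derivative_smooth: "\<And>v b. Cinf (\<lambda>x. D\<phi> x v \<bullet> b)"
    and range_subset: "range \<phi> \<subseteq> M"
    and related: "\<And>X. X \<in> V \<Longrightarrow>
       \<exists>Y\<in>W. \<forall>x\<in>N. D\<phi> x (X x) = Y (\<phi> x) \<and> (\<forall>t. \<phi> x + t *\<^sub>R Y (\<phi> x) \<in> M)"
begin

lemma image_in_M [simp]: "\<phi> x \<in> M"
  using range_subset by blast

definition pullback :: "('b \<Rightarrow> real) set \<Rightarrow> ('a \<Rightarrow> real) set" where
  "pullback A = {g. smooth_on N g \<and> (\<exists>f\<in>A. \<forall>x\<in>N. g x = f (\<phi> x))}"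

lemma smooth_on_compose:
  assumes "smooth_on M f"
  shows "smooth_on N (\<lambda>x. f (\<phi> x))"
proof -
  obtain F where F: "Cinf F" "\<forall>y\<in>M. F y = f y"
    using assms unfolding smooth_on_def by blast
  have "Cinf (\<lambda>x. F (\<phi> x))"
    by (rule Cinf_compose[OF has_derivative derivative_smooth F(1)])
  moreover have "\<forall>x\<in>N. F (\<phi> x) = f (\<phi> x)"
    using F(2) range_subset by blast
  ultimately show ?thesis unfolding smooth_on_def by blast
qed

lemma pullback_smooth_span:
  assumes fs: "\<forall>f\<in>set fs. smooth_on M f"
  shows "pullback (smooth_span M fs) = smooth_span N (map (\<lambda>f x. f (\<phi> x)) fs)"
proof (intro set_eqI iffI)
  fix g assume "g \<in> pullback (smooth_span M fs)"
  then obtain f c where "smooth_on N g" "\<forall>x\<in>N. g x = f (\<phi> x)"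
      and "\<forall>y\<in>M. f y = (\<Sum>i<length fs. c i * (fs!i) y)"
    unfolding pullback_def smooth_span_def by blast
  then show "g \<in> smooth_span N (map (\<lambda>f x. f (\<phi> x)) fs)"
    unfolding smooth_span_def by (auto intro!: exI[of _ c])
next
  fix g assume "g \<in> smooth_span N (map (\<lambda>f x. f (\<phi> x)) fs)"
  then obtain c where g: "smooth_on N g" "\<forall>x\<in>N. g x = (\<Sum>i<length fs. c i * (fs!i) (\<phi> x))"
    unfolding smooth_span_def by auto
  have "(\<lambda>y. \<Sum>i<length fs. c i * (fs!i) y) \<in> smooth_span M fs"
    using fs unfolding smooth_span_def by (auto intro: smooth_on_lincomb)
  with g show "g \<in> pullback (smooth_span M fs)"
    unfolding pullback_def by auto
qed

lemma vf_apply_pullback: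
  assumes "X \<in> V"
  obtains Y where "Y \<in> W"
    and "\<And>f x. smooth_on M f \<Longrightarrow> x \<in> N \<Longrightarrow> vf_apply X (\<lambda>x. f (\<phi> x)) x = vf_apply Y f (\<phi> x)"
proof -
  obtain Y where Y: "Y \<in> W"
    and rel: "\<forall>x\<in>N. D\<phi> x (X x) = Y (\<phi> x) \<and> (\<forall>t. \<phi> x + t *\<^sub>R Y (\<phi> x) \<in> M)"
    using related[OF assms] by blast
  have "vf_apply X (\<lambda>x. f (\<phi> x)) x = vf_apply Y f (\<phi> x)" if "smooth_on M f" "x \<in> N" for f x
  proof -
    obtain F where F: "Cinf F" "\<forall>y\<in>M. f y = F y"
      using \<open>smooth_on M f\<close> unfolding smooth_on_def by metis
    show ?thesis
      using rel \<open>x \<in> N\<close> F(2) range_subset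
      by (intro vf_apply_compose[OF Cinf_differentiable[OF F(1)] has_derivative]) auto
  qed
  with Y that show thesis by blast
qed

lemma darboux_family_pullback:
  assumes "darboux_family M W A"
  shows "darboux_family N V (pullback A)"
proof -
  obtain fs where fs: "\<forall>f\<in>set fs. smooth_on M f" and A: "A = smooth_span M fs"
    and cof: "\<forall>Y\<in>W. \<forall>j<length fs. \<exists>h::nat \<Rightarrow> 'b \<Rightarrow> real. (\<forall>i<length fs. smooth_on M (h i)) \<and>
        (\<forall>y\<in>M. vf_apply Y (fs!j) y = (\<Sum>i<length fs. h i y * (fs!i) y))"
    using assms unfolding darboux_family_def smooth_span_def[symmetric] by blast
  let ?gs = "map (\<lambda>f x. f (\<phi> x)) fs"
  have "\<exists>h::nat \<Rightarrow> 'a \<Rightarrow> real. (\<forall>i<length ?gs. smooth_on N (h i)) \<and>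
      (\<forall>x\<in>N. vf_apply X (?gs!j) x = (\<Sum>i<length ?gs. h i x * (?gs!i) x))"
    if X: "X \<in> V" and j: "j < length ?gs" for X j
  proof -
    obtain Y where "Y \<in> W"
      and XY: "\<And>f x. smooth_on M f \<Longrightarrow> x \<in> N \<Longrightarrow> vf_apply X (\<lambda>x. f (\<phi> x)) x = vf_apply Y f (\<phi> x)"
      using vf_apply_pullback[OF X] by blast
    moreover have j': "j < length fs" using j by simp
    ultimately obtain h where h: "\<forall>i<length fs. smooth_on M (h i)"
      "\<forall>y\<in>M. vf_apply Y (fs!j) y = (\<Sum>i<length fs. h i y * (fs!i) y)"
      using cof by blast
    show ?thesis
    proof (intro exI[of _ "\<lambda>i x. h i (\<phi> x)"] conjI allI ballI impI)
      show "smooth_on N (\<lambda>x. h i (\<phi> x))" if "i < length ?gs" for i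
        using h(1) that by (simp add: smooth_on_compose)
      show "vf_apply X (?gs!j) x = (\<Sum>i<length ?gs. h i (\<phi> x) * (?gs!i) x)" if "x \<in> N" for x
      proof -
        have "vf_apply X (?gs!j) x = vf_apply Y (fs!j) (\<phi> x)"
          using XY[of "fs!j" x] fs j' that by simp
        also have "\<dots> = (\<Sum>i<length fs. h i (\<phi> x) * (fs!i) (\<phi> x))"
          using h(2) by simp
        finally show ?thesis by simp
      qed
    qed
  qed
  moreover have "\<forall>g\<in>set ?gs. smooth_on N g"
    using fs by (auto intro: smooth_on_compose)
  moreover have "pullback A = smooth_span N ?gs"
    using A pullback_smooth_span[OF fs] by simp
  ultimately show ?thesis
    unfolding darboux_family_def smooth_span_def[symmetric] by blast
qed

lemma linear_darboux_family_pullback: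
  assumes "linear_darboux_family M W A"
  shows "linear_darboux_family N V (pullback A)"
proof -
  obtain fs where fs: "\<forall>f\<in>set fs. smooth_on M f" and A: "A = smooth_span M fs"
    and cof: "\<forall>Y\<in>W. \<forall>j<length fs. \<exists>h::nat \<Rightarrow> real.
        \<forall>y\<in>M. vf_apply Y (fs!j) y = (\<Sum>i<length fs. h i * (fs!i) y)"
    using assms unfolding linear_darboux_family_def smooth_span_def[symmetric] by blast
  let ?gs = "map (\<lambda>f x. f (\<phi> x)) fs"
  have "\<exists>h::nat \<Rightarrow> real. \<forall>x\<in>N. vf_apply X (?gs!j) x = (\<Sum>i<length ?gs. h i * (?gs!i) x)"
    if X: "X \<in> V" and j: "j < length ?gs" for X j
  proof -
    obtain Y where "Y \<in> W"
      and XY: "\<And>f x. smooth_on M f \<Longrightarrow> x \<in> N \<Longrightarrow> vf_apply X (\<lambda>x. f (\<phi> x)) x = vf_apply Y f (\<phi> x)"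
      using vf_apply_pullback[OF X] by blast
    moreover have j': "j < length fs" using j by simp
    ultimately obtain h where h: "\<forall>y\<in>M. vf_apply Y (fs!j) y = (\<Sum>i<length fs. h i * (fs!i) y)"
      using cof by blast
    show ?thesis
    proof (intro exI[of _ h] ballI)
      fix x assume "x \<in> N"
      have "vf_apply X (?gs!j) x = vf_apply Y (fs!j) (\<phi> x)"
        using XY[of "fs!j" x] fs j' \<open>x \<in> N\<close> by simp
      also have "\<dots> = (\<Sum>i<length fs. h i * (fs!i) (\<phi> x))"
        using h by simp
      finally show "vf_apply X (?gs!j) x = (\<Sum>i<length ?gs. h i * (?gs!i) x)" by simp
    qed
  qed
  moreover have "\<forall>g\<in>set ?gs. smooth_on N g"
    using fs by (auto intro: smooth_on_compose)
  moreover have "pullback A = smooth_span N ?gs"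
    using A pullback_smooth_span[OF fs] by simp
  ultimately show ?thesis
    unfolding linear_darboux_family_def smooth_span_def[symmetric] by blast
qed

end

section \<open>Equivariance of the Schouten square\<close>

lemma linear_vec_component:
  fixes f :: "real^'m \<Rightarrow> real^'n"
  assumes "linear f"
  shows "f v $ k = (\<Sum>a\<in>UNIV. f (axis a 1) $ k * v $ a)"
  using Cartesian_Space.linear_componentwise[of f v k] assms
  by (simp add: linear_matrix_vector_mul_eq mult.commute)

lemma column_expansion: "column b r = (\<Sum>a\<in>UNIV. r $ a $ b *\<^sub>R axis a (1::real))"
  by (simp add: column_def vec_eq_iff axis_def sum_component if_distrib cong: if_cong)

definition bracket_tensor ::
  "(real^'n \<Rightarrow> real^'n \<Rightarrow> real^'n) \<Rightarrow> real^'n^'n \<Rightarrow> real^'n^'n \<Rightarrow> real^'n^'n^'n" where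
  "bracket_tensor br r s = (\<chi> k b d. br (column b r) (column d s) $ k)"

lemma bilinear_column_component:
  fixes br :: "real^'n \<Rightarrow> real^'n \<Rightarrow> real^'m"
  assumes "bilinear br"
  shows "br (column b r) (column d s) $ k
    = (\<Sum>a\<in>UNIV. \<Sum>c\<in>UNIV. r$a$b * s$c$d * br (axis a 1) (axis c 1) $ k)"
proof -
  have "br (column b r) (column d s)
      = (\<Sum>a\<in>UNIV. \<Sum>c\<in>UNIV. (r$a$b * s$c$d) *\<^sub>R br (axis a 1) (axis c 1))"
    unfolding column_expansion bilinear_sum[OF assms] sum.cartesian_product[symmetric]
    by (simp add: bilinear_lmul[OF assms] bilinear_rmul[OF assms] mult.commute)
  then show ?thesis by (simp add: sum_component)
qed

lemma schouten_rr_eq_alt3_bracket_tensor: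
  assumes "bilinear br"
  shows "schouten_rr br r = alt3 (bracket_tensor br r r)"
  by (simp add: schouten_rr_def bracket_tensor_def bilinear_column_component[OF assms])

lemma bilinear_bracket_tensor:
  assumes "bilinear br"
  shows "bilinear (bracket_tensor br)"
  unfolding bilinear_def
  by (auto intro!: linearI simp: bracket_tensor_def vec_eq_iff bilinear_column_component[OF assms]
      algebra_simps sum.distrib sum_distrib_left)

lemma linear_alt3: "linear alt3"
  by (rule linearI) (simp_all add: alt3_def vec_eq_iff algebra_simps)

lemma alt3_in_Lambda3: "alt3 T \<in> Lambda3"
  by (simp add: Lambda3_def alt3_def)

lemma subspace_Lambda3: "subspace Lambda3"
proof (unfold subspace_def, intro conjI ballI allI)
  show "0 \<in> Lambda3" by (simp add: Lambda3_def)
next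
  fix x y :: "real^'n^'n^'n" assume x: "x \<in> Lambda3" and y: "y \<in> Lambda3"
  show "x + y \<in> Lambda3"
    unfolding Lambda3_def mem_Collect_eq vector_add_component
  proof (intro allI conjI)
    fix i j k
    have "x$i$j$k = - x$j$i$k" "x$i$j$k = - x$i$k$j" "y$i$j$k = - y$j$i$k" "y$i$j$k = - y$i$k$j"
      using x y unfolding Lambda3_def by blast+
    then show "x$i$j$k + y$i$j$k = - (x$j$i$k + y$j$i$k)" "x$i$j$k + y$i$j$k = - (x$i$k$j + y$i$k$j)"
      by linarith+
  qed
next
  fix c :: real and x :: "real^'n^'n^'n" assume x: "x \<in> Lambda3"
  show "c *\<^sub>R x \<in> Lambda3"
    unfolding Lambda3_def mem_Collect_eq vector_scaleR_component
  proof (intro allI conjI)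
    fix i j k
    have "x$i$j$k = - x$j$i$k" "x$i$j$k = - x$i$k$j"
      using x unfolding Lambda3_def by blast+
    then show "c *\<^sub>R x$i$j$k = - (c *\<^sub>R x$j$i$k)" "c *\<^sub>R x$i$j$k = - (c *\<^sub>R x$i$k$j)"
      by simp_all
  qed
qed

lemma lam3_alt3: "lam3 d (alt3 T) = alt3 (lam3 d T)"
  by (simp add: vec_eq_iff alt3_def lam3_def right_diff_distrib distrib_left sum_subtractf sum.distrib)

lemma column_lam2:
  assumes "linear d"
  shows "column j (lam2 d r) = d (column j r) + (\<Sum>m\<in>UNIV. d (axis m 1) $ j *\<^sub>R column m r)"
  using linear_vec_component[OF assms, of "column j r"]
  by (simp add: vec_eq_iff column_def lam2_def sum_component mult.commute)

lemma lam3_component: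
  assumes "linear d"
  shows "lam3 d T $ k $ b $ c = d (\<chi> a. T $ a $ b $ c) $ k
     + (\<Sum>m\<in>UNIV. d (axis m 1) $ b * T $ k $ m $ c) + (\<Sum>m\<in>UNIV. d (axis m 1) $ c * T $ k $ b $ m)"
  using linear_vec_component[OF assms, of "\<chi> a. T $ a $ b $ c" k]
  by (simp add: lam3_def mult.commute)

lemma bracket_tensor_lam2:
  fixes br :: "real^'n \<Rightarrow> real^'n \<Rightarrow> real^'n"
  assumes "bilinear br" and "derivation br d"
  shows "bracket_tensor br r (lam2 d r) + bracket_tensor br (lam2 d r) r = lam3 d (bracket_tensor br r r)"
proof -
  have lin_d: "linear d" and leibniz: "d (br x y) = br (d x) y + br x (d y)" for x y
    using assms(2) unfolding derivation_def by blast+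
  have lin_r: "linear (br x)" and lin_l: "linear (\<lambda>x. br x y)" for x y
    using assms(1) unfolding bilinear_def by blast+
  have "br (column b r) (column c (lam2 d r)) + br (column b (lam2 d r)) (column c r)
      = d (br (column b r) (column c r))
        + (\<Sum>m\<in>UNIV. d (axis m 1) $ b *\<^sub>R br (column m r) (column c r))
        + (\<Sum>m\<in>UNIV. d (axis m 1) $ c *\<^sub>R br (column b r) (column m r))" for b c
    by (simp add: column_lam2[OF lin_d] leibniz linear_add[OF lin_r] linear_add[OF lin_l]
        linear_sum[OF lin_r] linear_sum[OF lin_l] linear_scale[OF lin_r] linear_scale[OF lin_l])
  then show ?thesis
    by (simp add: vec_eq_iff bracket_tensor_def lam3_component[OF lin_d] sum_component)
qed

lemma schouten_rr_smooth_related: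
  fixes br :: "real^'n \<Rightarrow> real^'n \<Rightarrow> real^'n"
  assumes "bilinear br"
  shows "smooth_related_map (schouten_rr br)
    (\<lambda>r v. alt3 (bracket_tensor br r v + bracket_tensor br v r)) Lambda2 Lambda3 (Vg br) (Vg3 br)"
proof
  let ?B = "bracket_tensor br"
  have bil: "bilinear ?B" by (rule bilinear_bracket_tensor[OF assms])
  show "(schouten_rr br has_derivative (\<lambda>v. alt3 (?B r v + ?B v r))) (at r)" for r
  proof -
    have "((\<lambda>r. ?B r r) has_derivative (\<lambda>v. ?B r v + ?B v r)) (at r)"
      using bounded_bilinear.FDERIV[OF bil[unfolded bilinear_conv_bounded_bilinear],
          of id id r UNIV id id]
      by (simp add: id_def)
    then show ?thesis
      unfolding schouten_rr_eq_alt3_bracket_tensor[OF assms, abs_def]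
      using linear_alt3 by (auto intro: has_derivative_compose[unfolded o_def] linear_imp_has_derivative)
  qed
  show "Cinf (\<lambda>r. alt3 (?B r v + ?B v r) \<bullet> b)" for v b
  proof -
    have "linear (\<lambda>r. ?B r v + ?B v r)"
      using bil unfolding bilinear_def by (auto intro: linear_compose_add)
    from linear_compose[OF this linear_alt3]
    have "linear (\<lambda>r. alt3 (?B r v + ?B v r))" by (simp add: o_def)
    from linear_compose[OF this bounded_linear_inner_left[THEN bounded_linear.linear]]
    have "linear (\<lambda>r. alt3 (?B r v + ?B v r) \<bullet> b)" by (simp add: o_def)
    then show ?thesis by (simp add: Cinf_def Ck_linear)
  qed
  show "range (schouten_rr br) \<subseteq> Lambda3"
    by (auto simp: schouten_rr_def alt3_in_Lambda3)
  fix X assume "X \<in> Vg br"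
  then obtain d where d: "derivation br d" and X: "X = lam2 d"
    unfolding Vg_def by blast
  show "\<exists>Y\<in>Vg3 br. \<forall>r\<in>Lambda2. alt3 (?B r (X r) + ?B (X r) r) = Y (schouten_rr br r)
      \<and> (\<forall>t. schouten_rr br r + t *\<^sub>R Y (schouten_rr br r) \<in> Lambda3)"
  proof (intro bexI[of _ "lam3 d"] ballI conjI allI)
    show "lam3 d \<in> Vg3 br" using d unfolding Vg3_def by blast
    fix r t
    show "alt3 (?B r (X r) + ?B (X r) r) = lam3 d (schouten_rr br r)"
      by (simp add: X bracket_tensor_lam2[OF assms d] lam3_alt3 schouten_rr_eq_alt3_bracket_tensor[OF assms])
    show "schouten_rr br r + t *\<^sub>R lam3 d (schouten_rr br r) \<in> Lambda3"
      using subspace_Lambda3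
      by (intro subspace_add subspace_scale[unfolded scalar_mult_eq_scaleR])
        (simp_all add: schouten_rr_eq_alt3_bracket_tensor[OF assms] lam3_alt3 alt3_in_Lambda3)
  qed
qed

theorem theorem5p2:
  fixes br :: "real^'n \<Rightarrow> real^'n \<Rightarrow> real^'n"
    and A3 :: "(real^'n^'n^'n \<Rightarrow> real) set"
  assumes "lie_algebra br"
    and "darboux_family Lambda3 (Vg3 br) A3"
  defines "A \<equiv> {g. smooth_on Lambda2 g \<and>
                 (\<exists>f\<in>A3. \<forall>r\<in>Lambda2. g r = f (schouten_rr br r))}"
  shows "darboux_family Lambda2 (Vg br) A
         \<and> (linear_darboux_family Lambda3 (Vg3 br) A3 \<longrightarrow> linear_darboux_family Lambda2 (Vg br) A)"
proof -
  have "bilinear br" using assms(1) by (simp add: lie_algebra_def)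
  then interpret smooth_related_map "schouten_rr br"
      "\<lambda>r v. alt3 (bracket_tensor br r v + bracket_tensor br v r)" Lambda2 Lambda3 "Vg br" "Vg3 br"
    by (rule schouten_rr_smooth_related)
  have "A = pullback A3" by (simp add: A_def pullback_def)
  then show ?thesis
    using darboux_family_pullback[OF assms(2)] linear_darboux_family_pullback by simp
qed

end
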